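(* Let $G$ be a graph of order $n$. Then $a(G)+a(\overline{G})\le n+4$. Moreover, this bound is sharp: for every $n\ge 4$, the path $P_n$ on $n$ vertices satisfies $a(P_n)+a(\overline{P_n})=n+4$.
   Context: All graphs are finite and simple; $\overline{G}$ denotes the complement of $G$. For a graph $G$, $a(G)$ denotes the maximum number of vertices of an induced subgraph of $G$ that is a forest. The order of a graph is its number of vertices. *)

theory Defs
  imports Main
begin

definition simple_graph :: "'a set \<Rightarrow> ('a \<Rightarrow> 'a \<Rightarrow> bool) \<Rightarrow> bool" where
  "simple_graph V E \<longleftrightarrow> finite V \<and> (\<forall>x\<in>V. \<forall>y\<in>V. E x y \<longrightarrow> E y x) \<and> (\<forall>x\<in>V. \<not> E x x)"

definition compl_graph :: "('a \<Rightarrow> 'a \<Rightarrow> bool) \<Rightarrow> 'a \<Rightarrow> 'a \<Rightarrow> bool" where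
  "compl_graph E = (\<lambda>x y. x \<noteq> y \<and> \<not> E x y)"

definition is_cycle_in :: "'a set \<Rightarrow> ('a \<Rightarrow> 'a \<Rightarrow> bool) \<Rightarrow> 'a list \<Rightarrow> bool" where
  "is_cycle_in S E cs \<longleftrightarrow> length cs \<ge> 3 \<and> distinct cs \<and> set cs \<subseteq> S \<and>
     (\<forall>i < length cs. E (cs ! i) (cs ! ((i + 1) mod length cs)))"

definition induced_forest :: "'a set \<Rightarrow> ('a \<Rightarrow> 'a \<Rightarrow> bool) \<Rightarrow> 'a set \<Rightarrow> bool" where
  "induced_forest V E S \<longleftrightarrow> S \<subseteq> V \<and> \<not> (\<exists>cs. is_cycle_in S E cs)"

definition forest_number :: "'a set \<Rightarrow> ('a \<Rightarrow> 'a \<Rightarrow> bool) \<Rightarrow> nat" where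
  "forest_number V E = Max {card S | S. induced_forest V E S}"

text \<open>The path P_n on vertices 0,...,n-1.\<close>
definition path_edge :: "nat \<Rightarrow> nat \<Rightarrow> bool" where
  "path_edge i j \<longleftrightarrow> j = i + 1 \<or> i = j + 1"

end

theory Submission
  imports Defs
begin

text \<open>If \<open>F\<close> induces a forest in \<open>G\<close> and \<open>F'\<close> one in the complement, then
  \<open>|F| + |F'| = |F \<union> F'| + |F \<inter> F'| \<le> n + |F \<inter> F'|\<close>, and \<open>|F \<inter> F'| \<le> 4\<close> because on any
  five vertices the graph or its complement contains a cycle: if neither has a triangle, no
  vertex has three neighbours of the same colour, so every vertex has exactly two neighbours,
  and this forces a 4- or 5-cycle.  Equality holds for \<open>P\<^sub>n\<close>, which is a forest, since the
  complement of \<open>P\<^sub>4\<close> is again a path.\<close>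

abbreviation has_cycle :: "'a set \<Rightarrow> ('a \<Rightarrow> 'a \<Rightarrow> bool) \<Rightarrow> bool" where
  "has_cycle S R \<equiv> \<exists>cs. is_cycle_in S R cs"

lemma is_cycle_in_iff_closed_walk:
  "is_cycle_in S R cs \<longleftrightarrow>
     length cs \<ge> 3 \<and> distinct cs \<and> set cs \<subseteq> S \<and> successively R cs \<and> R (last cs) (hd cs)"
proof (cases "cs = []")
  case True
  then show ?thesis by (simp add: is_cycle_in_def)
next
  case False
  define L where "L = length cs"
  have "L > 0" using False unfolding L_def by simp
  have "(\<forall>i < L. R (cs ! i) (cs ! (Suc i mod L))) \<longleftrightarrow>
      (\<forall>i. Suc i < L \<longrightarrow> R (cs ! i) (cs ! Suc i)) \<and> R (cs ! (L - 1)) (cs ! 0)"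
  proof safe
    fix i assume H: "\<forall>i < L. R (cs ! i) (cs ! (Suc i mod L))" and "Suc i < L"
    then show "R (cs ! i) (cs ! Suc i)" using H[rule_format, of i] by simp
  next
    assume "\<forall>i < L. R (cs ! i) (cs ! (Suc i mod L))"
    then show "R (cs ! (L - 1)) (cs ! 0)" using \<open>L > 0\<close> by (metis Suc_pred' diff_less mod_self zero_less_one)
  next
    fix i assume "\<forall>i. Suc i < L \<longrightarrow> R (cs ! i) (cs ! Suc i)" "R (cs ! (L - 1)) (cs ! 0)" "i < L"
    then show "R (cs ! i) (cs ! (Suc i mod L))" by (cases "Suc i = L") auto
  qed
  then show ?thesis
    using False unfolding is_cycle_in_def Suc_eq_plus1[symmetric] successively_conv_nth L_def
    by (simp add: last_conv_nth hd_conv_nth)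
qed

lemma is_cycle_in_mono: "is_cycle_in S R cs \<Longrightarrow> S \<subseteq> T \<Longrightarrow> is_cycle_in T R cs"
  unfolding is_cycle_in_def by auto

lemma is_cycle_in_two_neighbours:
  assumes cyc: "is_cycle_in S R cs" and x: "x \<in> set cs"
  obtains y z where "y \<noteq> z" "y \<in> set cs" "z \<in> set cs" "R x y" "R z x"
proof -
  define L where "L = length cs"
  have L: "L \<ge> 3" and dist: "distinct cs"
    and step: "\<And>i. i < L \<Longrightarrow> R (cs ! i) (cs ! ((i + 1) mod L))"
    using cyc unfolding is_cycle_in_def L_def by auto
  obtain i where i: "i < L" "x = cs ! i" using x unfolding L_def by (metis in_set_conv_nth)
  define j where "j = (if i = 0 then L - 1 else i - 1)"
  have succ_i: "(i + 1) mod L = (if i + 1 = L then 0 else i + 1)" using i by auto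
  have succ_j: "(j + 1) mod L = i" using i L unfolding j_def by auto
  have ne: "(i + 1) mod L \<noteq> j" and lt: "(i + 1) mod L < L" "j < L"
    using i L unfolding succ_i j_def by auto
  show thesis
  proof (rule that)
    show "cs ! ((i + 1) mod L) \<noteq> cs ! j"
      using ne lt dist unfolding L_def by (simp add: nth_eq_iff_index_eq)
    show "cs ! ((i + 1) mod L) \<in> set cs" "cs ! j \<in> set cs" using lt unfolding L_def by simp_all
    show "R x (cs ! ((i + 1) mod L))" using step[OF i(1)] i(2) by simp
    show "R (cs ! j) x" using step[OF lt(2)] unfolding succ_j i(2) .
  qed
qed

lemma triangle_has_cycle:
  assumes "distinct [x, y, z]" "{x, y, z} \<subseteq> S" "R x y" "R y z" "R z x"
  shows "has_cycle S R"
  using assms unfolding is_cycle_in_iff_closed_walk by (intro exI[of _ "[x, y, z]"]) simp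

lemma square_has_cycle:
  assumes "distinct [x, y, z, u]" "{x, y, z, u} \<subseteq> S" "R x y" "R y z" "R z u" "R u x"
  shows "has_cycle S R"
  using assms unfolding is_cycle_in_iff_closed_walk by (intro exI[of _ "[x, y, z, u]"]) simp

lemma pentagon_has_cycle:
  assumes "distinct [x, y, z, u, v]" "{x, y, z, u, v} \<subseteq> S" "R x y" "R y z" "R z u" "R u v" "R v x"
  shows "has_cycle S R"
  using assms unfolding is_cycle_in_iff_closed_walk by (intro exI[of _ "[x, y, z, u, v]"]) simp

lemma monochromatic_triangle_has_cycle:
  assumes "symp_on S E" "distinct [x, y, z]" "{x, y, z} \<subseteq> S"
    and "E x y = c" "E y z = c" "E x z = c"
  shows "has_cycle S E \<or> has_cycle S (compl_graph E)"
proof (cases c)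
  case True
  then have "has_cycle S E"
    using assms by (intro triangle_has_cycle[of x y z]) (auto dest: symp_onD)
  then show ?thesis ..
next
  case False
  then have "has_cycle S (compl_graph E)"
    using assms by (intro triangle_has_cycle[of x y z]) (auto simp: compl_graph_def dest: symp_onD)
  then show ?thesis ..
qed

lemma monochromatic_claw_has_cycle:
  assumes sym: "symp_on S E" and "distinct [x, u, v, w]" "{x, u, v, w} \<subseteq> S"
    and "E x u = c" "E x v = c" "E x w = c"
  shows "has_cycle S E \<or> has_cycle S (compl_graph E)"
proof (cases "E u v = c \<or> E v w = c \<or> E u w = c")
  case True
  then show ?thesis
    using assms monochromatic_triangle_has_cycle[OF sym, of x u v c]
      monochromatic_triangle_has_cycle[OF sym, of x v w c]
      monochromatic_triangle_has_cycle[OF sym, of x u w c]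
    by auto
next
  case False
  then show ?thesis
    using assms by (intro monochromatic_triangle_has_cycle[OF sym, of u v w "\<not> c"]) auto
qed

lemma five_vertices_balanced_neighbours:
  assumes card: "card S = 5" and a: "a \<in> S"
    and colour_class: "\<And>c. card {y \<in> S - {a}. E a y = c} \<le> 2"
  obtains p q r s where "distinct [a, p, q, r, s]" "{a, p, q, r, s} \<subseteq> S"
    "E a p" "E a q" "\<not> E a r" "\<not> E a s"
proof -
  have fin: "finite S" using card by (intro card_ge_0_finite) simp
  have "4 = card (S - {a})" using card a by simp
  also have "\<dots> = card ({y \<in> S - {a}. E a y} \<union> {y \<in> S - {a}. \<not> E a y})"
    by (rule arg_cong[where f = card]) auto
  also have "\<dots> = card {y \<in> S - {a}. E a y} + card {y \<in> S - {a}. \<not> E a y}"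
    using fin by (intro card_Un_disjoint) auto
  finally have "card {y \<in> S - {a}. E a y} = 2" "card {y \<in> S - {a}. \<not> E a y} = 2"
    using colour_class[of True] colour_class[of False] by simp_all
  then obtain p q r s where pq: "{y \<in> S - {a}. E a y} = {p, q}" "p \<noteq> q"
    and rs: "{y \<in> S - {a}. \<not> E a y} = {r, s}" "r \<noteq> s"
    by (meson card_2_iff)
  have N: "p \<in> S - {a}" "q \<in> S - {a}" "E a p" "E a q"
    using pq(1) by (auto simp: set_eq_iff)
  have M: "r \<in> S - {a}" "s \<in> S - {a}" "\<not> E a r" "\<not> E a s"
    using rs(1) by (auto simp: set_eq_iff)
  show thesis
    by (rule that[of p q r s]) (use a N M pq(2) rs(2) in auto)
qed

lemma five_vertices_has_cycle:
  assumes sym: "symp_on S E" and card: "card S = 5"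
  shows "has_cycle S E \<or> has_cycle S (compl_graph E)"
proof (rule ccontr)
  assume no_cycle: "\<not> ?thesis"
  have no_triangle: False
    if "distinct [x, y, z]" "{x, y, z} \<subseteq> S" "E x y = c" "E y z = c" "E x z = c" for x y z c
    using monochromatic_triangle_has_cycle[OF sym that] no_cycle by blast
  have no_claw: False
    if "distinct [x, u, v, w]" "{x, u, v, w} \<subseteq> S" "E x u = c" "E x v = c" "E x w = c" for x u v w c
    using monochromatic_claw_has_cycle[OF sym that] no_cycle by blast
  have "S \<noteq> {}" using card by auto
  then obtain a where a: "a \<in> S" by blast
  have "card {y \<in> S - {a}. E a y = c} \<le> 2" for c
  proof (rule ccontr)
    assume "\<not> ?thesis"
    then have "3 \<le> card {y \<in> S - {a}. E a y = c}" by simp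
    then obtain T where T: "T \<subseteq> {y \<in> S - {a}. E a y = c}" "card T = 3"
      by (rule obtain_subset_with_card_n)
    then obtain u v w where "T = {u, v, w}" "u \<noteq> v" "v \<noteq> w" "u \<noteq> w"
      by (auto simp: card_3_iff)
    then show False using T(1) a by (intro no_claw[of a u v w c]) auto
  qed
  then obtain p q r s where dist: "distinct [a, p, q, r, s]" and S: "{a, p, q, r, s} \<subseteq> S"
    and colours: "E a p" "E a q" "\<not> E a r" "\<not> E a s"
    using five_vertices_balanced_neighbours[OF card a] by blast
  have adj: "E x y \<longleftrightarrow> E y x" if "x \<in> S" "y \<in> S" for x y
    using sym that by (auto dest: symp_onD)
  have "\<not> E p q" using no_triangle[of a p q True] S dist colours by auto
  moreover have "E r s" using no_triangle[of a r s False] S dist colours by auto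
  moreover have "E p r \<or> E p s"
    using no_claw[of p q r s False] \<open>\<not> E p q\<close> S dist by auto
  moreover have "E q r \<or> E q s"
    using no_claw[of q p r s False] \<open>\<not> E p q\<close> adj S dist by auto
  ultimately have "has_cycle S E"
    using square_has_cycle[of a p r q S E] square_has_cycle[of a p s q S E]
      pentagon_has_cycle[of a p r s q S E] pentagon_has_cycle[of a p s r q S E]
      S dist colours adj
    by auto
  then show False using no_cycle by blast
qed

lemma induced_forest_empty: "induced_forest V E {}"
  unfolding induced_forest_def is_cycle_in_def by auto

lemma finite_forest_orders: "finite V \<Longrightarrow> finite {card S |S. induced_forest V E S}"
  by (rule finite_subset[of _ "{..card V}"]) (auto simp: induced_forest_def intro: card_mono)

lemma card_le_forest_number:
  "finite V \<Longrightarrow> induced_forest V E S \<Longrightarrow> card S \<le> forest_number V E"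
  unfolding forest_number_def by (auto intro: Max_ge finite_forest_orders)

lemma forest_number_attained:
  assumes "finite V"
  obtains S where "induced_forest V E S" "card S = forest_number V E"
proof -
  have "forest_number V E \<in> {card S |S. induced_forest V E S}"
    unfolding forest_number_def using assms induced_forest_empty
    by (intro Max_in finite_forest_orders) auto
  then obtain S where "induced_forest V E S" "forest_number V E = card S" by auto
  then show thesis using that by simp
qed

lemma card_Int_forest_compl_forest_le:
  assumes sym: "symp_on V E"
    and F: "induced_forest V E F" and F': "induced_forest V (compl_graph E) F'"
  shows "card (F \<inter> F') \<le> 4"
proof (rule ccontr)
  assume "\<not> ?thesis"
  then have "5 \<le> card (F \<inter> F')" by simp
  then obtain T where T: "T \<subseteq> F \<inter> F'" "card T = 5"
    by (rule obtain_subset_with_card_n)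
  have "symp_on T E"
    using sym T(1) F unfolding induced_forest_def by (blast intro: symp_on_subset)
  then have "has_cycle T E \<or> has_cycle T (compl_graph E)"
    using T(2) by (rule five_vertices_has_cycle)
  then show False
    using F F' T(1) unfolding induced_forest_def by (meson is_cycle_in_mono le_inf_iff)
qed

lemma forest_number_add_compl_le:
  assumes G: "simple_graph V E"
  shows "forest_number V E + forest_number V (compl_graph E) \<le> card V + 4"
proof -
  have fin: "finite V" and sym: "symp_on V E"
    using G unfolding simple_graph_def symp_on_def by auto
  obtain F where F: "induced_forest V E F" "card F = forest_number V E"
    using forest_number_attained[OF fin] .
  obtain F' where F': "induced_forest V (compl_graph E) F'" "card F' = forest_number V (compl_graph E)"
    using forest_number_attained[OF fin] .
  have sub: "F \<subseteq> V" "F' \<subseteq> V" using F(1) F'(1) unfolding induced_forest_def by auto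
  have "card F + card F' = card (F \<union> F') + card (F \<inter> F')"
    using sub fin by (intro card_Un_Int) (auto intro: finite_subset)
  also have "\<dots> \<le> card V + 4"
    using card_mono[OF fin, of "F \<union> F'"] sub card_Int_forest_compl_forest_le[OF sym F(1) F'(1)]
    by simp
  finally show ?thesis using F(2) F'(2) by simp
qed

lemma simple_graph_path: "simple_graph {0..<n} path_edge"
  unfolding simple_graph_def path_edge_def by auto

lemma induced_forest_path: "induced_forest {0..<n} path_edge {0..<n}"
  unfolding induced_forest_def
proof (intro conjI notI; clarify?)
  fix cs assume cyc: "is_cycle_in {0..<n} path_edge cs"
  then have "cs \<noteq> []" unfolding is_cycle_in_def by auto
  define m where "m = Min (set cs)"
  have m: "m \<in> set cs" and min: "\<And>y. y \<in> set cs \<Longrightarrow> m \<le> y"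
    using \<open>cs \<noteq> []\<close> unfolding m_def by simp_all
  obtain y z where "y \<noteq> z" "y \<in> set cs" "z \<in> set cs" "path_edge m y" "path_edge z m"
    by (rule is_cycle_in_two_neighbours[OF cyc m])
  then show False using min unfolding path_edge_def by force
qed

text \<open>The complement of \<open>P\<^sub>4\<close> is the path \<open>2 - 0 - 3 - 1\<close>.\<close>

lemma induced_forest_compl_path_4:
  assumes "n \<ge> 4"
  shows "induced_forest {0..<n} (compl_graph path_edge) {0, 1, 2, 3}"
  unfolding induced_forest_def
proof (intro conjI notI; clarify?)
  fix cs assume cyc: "is_cycle_in {0, 1, 2, 3} (compl_graph path_edge) cs"
  have sub: "set cs \<subseteq> {0, 1, 2, 3}" and len: "length cs \<ge> 3" "distinct cs"
    using cyc unfolding is_cycle_in_def by auto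
  have off_cycle: "x \<notin> set cs" if "x \<in> {1, 2}" for x
  proof
    assume "x \<in> set cs"
    then obtain y z where "y \<noteq> z" "y \<in> set cs" "z \<in> set cs"
      "compl_graph path_edge x y" "compl_graph path_edge z x"
      by (rule is_cycle_in_two_neighbours[OF cyc])
    moreover have "y \<in> {0, 1, 2, 3}" "z \<in> {0, 1, 2, 3}"
      using sub \<open>y \<in> set cs\<close> \<open>z \<in> set cs\<close> by auto
    ultimately show False using that unfolding compl_graph_def path_edge_def by auto
  qed
  have "set cs \<subseteq> {0, 3}" using sub off_cycle by auto
  then have "card (set cs) \<le> card {0, 3 :: nat}" by (intro card_mono) simp_all
  then have "card (set cs) \<le> 2" by simp
  then show False using len by (simp add: distinct_card)
qed (use assms in auto)

theorem theorem3:
  shows "(\<forall>(V :: 'a set) E n. simple_graph V E \<and> card V = n \<longrightarrow>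
            forest_number V E + forest_number V (compl_graph E) \<le> n + 4)
       \<and> (\<forall>n::nat. n \<ge> 4 \<longrightarrow>
            forest_number {0..<n} path_edge + forest_number {0..<n} (compl_graph path_edge) = n + 4)"
proof (intro conjI allI impI)
  fix V :: "'a set" and E n
  assume "simple_graph V E \<and> card V = n"
  then show "forest_number V E + forest_number V (compl_graph E) \<le> n + 4"
    using forest_number_add_compl_le by blast
next
  fix n :: nat
  assume "n \<ge> 4"
  have "n \<le> forest_number {0..<n} path_edge"
    using card_le_forest_number[OF _ induced_forest_path] by simp
  moreover have "4 \<le> forest_number {0..<n} (compl_graph path_edge)"
    using card_le_forest_number[OF _ induced_forest_compl_path_4[OF \<open>n \<ge> 4\<close>]] by simp
  moreover have "forest_number {0..<n} path_edge + forest_number {0..<n} (compl_graph path_edge) \<le> n + 4"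
    using forest_number_add_compl_le[OF simple_graph_path] by simp
  ultimately show "forest_number {0..<n} path_edge + forest_number {0..<n} (compl_graph path_edge) = n + 4"
    by linarith
qed

end
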